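(* Let $a\in(0,1)$, $p\in(0,1)$, and let $X=(X_t)_{t=0,\dots,n}$ be a stationary Markov chain generated by the copula $C(u,v)=a\min(u,v)+(1-a)\max(u+v-1,0)$ and Bernoulli($p$) marginal distribution, and let $\bar p=\frac1{n+1}\sum_{t=0}^nX_t$ be the sample mean. Then $\sqrt{n+1}(\bar p-p)\to N(0,\sigma^2)$ in distribution as $n\to\infty$, where $\sigma^2=\frac{p(1-p)(1+a-2p)}{1-a}$ if $p<1/2$ and $\sigma^2=\frac{p(1-p)(a+2p-1)}{1-a}$ if $p\ge1/2$.
   Context: A stationary Markov chain $(X_t)$ is generated by a copula $C$ and a marginal cdf $F$ if each $X_t$ has cdf $F$ and $P(X_t\le x,X_{t+1}\le y)=C(F(x),F(y))$ for all $x,y$; Bernoulli($p$) means $P(X_t=1)=p=1-P(X_t=0)$. *)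

theory Defs
  imports "HOL-Probability.Probability"
begin

definition mix_copula :: "real \<Rightarrow> real \<Rightarrow> real \<Rightarrow> real" where
  "mix_copula a u v = a * min u v + (1 - a) * max (u + v - 1) 0"

definition bernoulli_cdf :: "real \<Rightarrow> real \<Rightarrow> real" where
  "bernoulli_cdf p x = (if x < 0 then 0 else if x < 1 then 1 - p else 1)"

text \<open>Markov property for a discrete-valued process (X t) on a probability space M:
  P(X_0 = x_0, ..., X_(t+1) = x_(t+1)) * P(X_t = x_t)
    = P(X_0 = x_0, ..., X_t = x_t) * P(X_t = x_t, X_(t+1) = x_(t+1)),
  i.e. the conditional law of X_(t+1) given X_0..X_t depends only on X_t.\<close>
definition discrete_markov :: "'s measure \<Rightarrow> (nat \<Rightarrow> 's \<Rightarrow> real) \<Rightarrow> bool" where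
  "discrete_markov M X \<longleftrightarrow>
     (\<forall>t (x :: nat \<Rightarrow> real).
        measure M {\<omega> \<in> space M. \<forall>i\<le>Suc t. X i \<omega> = x i} * measure M {\<omega> \<in> space M. X t \<omega> = x t}
      = measure M {\<omega> \<in> space M. \<forall>i\<le>t. X i \<omega> = x i}
        * measure M {\<omega> \<in> space M. X t \<omega> = x t \<and> X (Suc t) \<omega> = x (Suc t)})"

definition copula_markov_chain ::
  "'s measure \<Rightarrow> (nat \<Rightarrow> 's \<Rightarrow> real) \<Rightarrow> (real \<Rightarrow> real \<Rightarrow> real) \<Rightarrow> (real \<Rightarrow> real) \<Rightarrow> bool" where
  "copula_markov_chain M X C F \<longleftrightarrow>
     prob_space M \<and>
     (\<forall>t. X t \<in> borel_measurable M) \<and>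
     discrete_markov M X \<and>
     (\<forall>t x. measure M {\<omega> \<in> space M. X t \<omega> \<le> x} = F x) \<and>
     (\<forall>t x y. measure M {\<omega> \<in> space M. X t \<omega> \<le> x \<and> X (Suc t) \<omega> \<le> y} = C (F x) (F y))"

end

(* Almost surely every X_t is 0 or 1, so X is a stationary two-state Markov chain. Its transition
   probabilities are read off from C(1-p, 1-p) = P(X_t = 0, X_(t+1) = 0), and the second eigenvalue
   of its transition matrix is lam = (a-p)/(1-p) for p < 1/2 and (a+p-1)/p otherwise, so |lam| < 1.
   Conditioning on the last state turns E exp(iu(X_0 + ... + X_n)) into a product of transfer
   matrices, and by Cayley-Hamilton it equals c1(u) r1(u)^(n+1) + c2(u) r2(u)^(n+1), where r1, r2
   are the eigenvalues of the transfer matrix, with r1(0) = 1 and r2(0) = lam. The r2 term dies out,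
   and a second-order expansion r1(u) exp(-ipu) = 1 - sigma^2 u^2/2 + o(u^2) with
   sigma^2 = p(1-p)(1+lam)/(1-lam) makes the characteristic functions of sqrt(n+1)(pbar - p)
   converge to exp(-sigma^2 t^2/2); Levy's continuity theorem concludes. *)

theory Submission
  imports Defs "HOL-Real_Asymp.Real_Asymp"
begin

section \<open>Linear recurrences and second-order remainders\<close>

lemma linear_recurrence_closed_form:
  fixes s :: "nat \<Rightarrow> 'a::field"
  assumes rec: "\<And>m. s (Suc (Suc m)) = (r1 + r2) * s (Suc m) - r1 * r2 * s m"
    and distinct: "r1 \<noteq> r2"
  shows "s m = (s 1 - r2 * s 0) / (r1 - r2) * r1 ^ m + (r1 * s 0 - s 1) / (r1 - r2) * r2 ^ m"
proof -
  define c1 where "c1 = (s 1 - r2 * s 0) / (r1 - r2)"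
  define c2 where "c2 = (r1 * s 0 - s 1) / (r1 - r2)"
  have nz: "r1 - r2 \<noteq> 0" using distinct by simp
  have "s m = c1 * r1 ^ m + c2 * r2 ^ m"
  proof (induction m rule: less_induct)
    case (less m)
    consider "m = 0" | "m = 1" | k where "m = Suc (Suc k)"
      by (metis One_nat_def not0_implies_Suc)
    then show ?case
    proof cases
      case (3 k)
      then have "s m = (r1 + r2) * s (Suc k) - r1 * r2 * s k" using rec by simp
      also have "\<dots> = c1 * r1 ^ m + c2 * r2 ^ m"
        using less[of k] less[of "Suc k"] 3 by (simp add: algebra_simps)
      finally show ?thesis .
    qed (use nz in \<open>simp_all add: c1_def c2_def divide_simps, simp_all add: algebra_simps\<close>)
  qed
  then show ?thesis by (simp add: c1_def c2_def)
qed

definition iexp_remainder :: "real \<Rightarrow> complex" where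
  "iexp_remainder x = iexp x - 1 - \<i> * x"

lemma norm_iexp_remainder_le: "norm (iexp_remainder x + of_real (x\<^sup>2 / 2)) \<le> \<bar>x\<bar> ^ 3 / 6"
proof -
  have "(\<Sum>k\<le>2. (\<i> * of_real x) ^ k / fact k) = 1 + \<i> * x - of_real (x\<^sup>2 / 2)"
    by (simp add: numeral_2_eq_2 power2_eq_square field_simps)
  then have "norm (iexp x - (1 + \<i> * x - of_real (x\<^sup>2 / 2))) \<le> \<bar>x\<bar> ^ 3 / 6"
    using iexp_approx1[of x 2] by (simp add: numeral_3_eq_3)
  moreover have "iexp x - (1 + \<i> * x - of_real (x\<^sup>2 / 2)) = iexp_remainder x + of_real (x\<^sup>2 / 2)"
    by (simp add: iexp_remainder_def algebra_simps)
  ultimately show ?thesis by metis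
qed

lemma iexp_remainder_limit:
  "((\<lambda>u. iexp_remainder (c * u) / of_real (u\<^sup>2)) \<longlongrightarrow> - of_real (c\<^sup>2 / 2)) (at 0)"
proof -
  have "((\<lambda>u. iexp_remainder (c * u) / of_real (u\<^sup>2) + of_real (c\<^sup>2 / 2)) \<longlongrightarrow> 0) (at 0)"
  proof (rule Lim_null_comparison)
    show "\<forall>\<^sub>F u in at 0. norm (iexp_remainder (c * u) / of_real (u\<^sup>2) + of_real (c\<^sup>2 / 2))
                        \<le> \<bar>c\<bar> ^ 3 * \<bar>u\<bar> / 6"
      unfolding eventually_at_filter
    proof (intro always_eventually allI impI)
      fix u :: real assume "u \<noteq> 0"
      have "iexp_remainder (c * u) / of_real (u\<^sup>2) + of_real (c\<^sup>2 / 2)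
          = (iexp_remainder (c * u) + of_real ((c * u)\<^sup>2 / 2)) / of_real (u\<^sup>2)"
        using \<open>u \<noteq> 0\<close> by (simp add: field_simps)
      also have "norm \<dots> \<le> (\<bar>c * u\<bar> ^ 3 / 6) / u\<^sup>2"
        using norm_iexp_remainder_le[of "c * u"] \<open>u \<noteq> 0\<close>
        by (simp add: norm_divide norm_power field_simps)
      also have "\<dots> = \<bar>c\<bar> ^ 3 * \<bar>u\<bar> / 6"
      proof -
        have "\<bar>u\<bar> ^ 3 = \<bar>u\<bar> * u\<^sup>2"
          by (simp add: power2_eq_square power3_eq_cube mult.assoc)
        then show ?thesis using \<open>u \<noteq> 0\<close> by (simp add: abs_mult power_mult_distrib)
      qed
      finally show "norm (iexp_remainder (c * u) / of_real (u\<^sup>2) + of_real (c\<^sup>2 / 2))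
                      \<le> \<bar>c\<bar> ^ 3 * \<bar>u\<bar> / 6" .
    qed
    show "((\<lambda>u. \<bar>c\<bar> ^ 3 * \<bar>u\<bar> / 6) \<longlongrightarrow> 0) (at (0::real))"
      by (intro tendsto_eq_intros) auto
  qed
  from tendsto_add[OF this tendsto_const[of "- of_real (c\<^sup>2 / 2)"]] show ?thesis
    by simp
qed

lemma tendsto_power_exp:
  fixes z :: "nat \<Rightarrow> complex"
  assumes z: "z \<longlonglongrightarrow> 1" and N: "(\<lambda>n. of_nat (N n) * (z n - 1)) \<longlonglongrightarrow> L"
  shows "(\<lambda>n. z n ^ N n) \<longlonglongrightarrow> exp L"
proof -
  define h where "h w = (if w = 1 then 1 else Ln w / (w - 1))" for w :: complex
  have "(h \<longlongrightarrow> 1) (at 1)"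
  proof -
    have "(Ln has_field_derivative 1) (at (1::complex))"
      using has_field_derivative_Ln[of 1] by simp
    then have "((\<lambda>w. (Ln w - Ln 1) / (w - 1)) \<longlongrightarrow> 1) (at (1::complex))"
      unfolding has_field_derivative_iff by simp
    then show ?thesis
      by (rule Lim_transform_eventually) (simp add: eventually_at_filter h_def)
  qed
  then have "isCont h 1" by (simp add: isCont_def h_def)
  then have "(\<lambda>n. exp (of_nat (N n) * (z n - 1) * h (z n))) \<longlonglongrightarrow> exp (L * h 1)"
    by (intro tendsto_intros N isCont_tendsto_compose[OF _ z])
  moreover have "\<forall>\<^sub>F n in sequentially. exp (of_nat (N n) * (z n - 1) * h (z n)) = z n ^ N n"
    using tendsto_imp_eventually_ne[OF z one_neq_zero]
  proof eventually_elim
    case (elim n)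
    have "(z n - 1) * h (z n) = Ln (z n)" by (simp add: h_def)
    then show ?case using elim by (simp add: mult.assoc exp_of_nat_mult)
  qed
  ultimately show ?thesis by (simp add: h_def Lim_transform_eventually)
qed

section \<open>Characteristic functions of a stationary two-state chain\<close>

locale two_state_chain =
  fixes q00 q11 p :: real
  assumes p_pos: "0 < p" and p_less_1: "p < 1"
    and stationary: "(1 - p) * (1 - q00) = p * (1 - q11)"
begin

definition lam :: real where "lam = q00 + q11 - 1"

definition stationary_prob :: "real \<Rightarrow> real" where
  "stationary_prob x = (if x = 0 then 1 - p else p)"

definition transition_prob :: "real \<Rightarrow> real \<Rightarrow> real" where
  "transition_prob x y =
     (if x = 0 then (if y = 0 then q00 else 1 - q00) else (if y = 0 then 1 - q11 else q11))"

(* char_part u m y plays the role of E[exp(iu(Y_1 + ... + Y_m)); Y_m = y] for a chain started in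
   its stationary law: each step multiplies by the transfer matrix with entries
   transition_prob x y * exp(iuy). *)
fun char_part :: "real \<Rightarrow> nat \<Rightarrow> real \<Rightarrow> complex" where
  "char_part u 0 y = stationary_prob y"
| "char_part u (Suc m) y = iexp (u * y) * (\<Sum>x\<in>{0,1}. transition_prob x y * char_part u m x)"

definition char_sum :: "real \<Rightarrow> nat \<Rightarrow> complex" where
  "char_sum u m = char_part u m 0 + char_part u m 1"

definition transfer_trace :: "real \<Rightarrow> complex" where
  "transfer_trace u = q00 + q11 * iexp u"

definition transfer_det :: "real \<Rightarrow> complex" where
  "transfer_det u = lam * iexp u"

(* Cayley-Hamilton: transfer_trace and transfer_det are the trace and determinant of the
   transfer matrix. *)
lemma char_sum_Suc_Suc:
  "char_sum u (Suc (Suc m)) = transfer_trace u * char_sum u (Suc m) - transfer_det u * char_sum u m"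
  by (simp add: char_sum_def transition_prob_def transfer_trace_def transfer_det_def lam_def
      algebra_simps)

lemma char_sum_1: "char_sum u 1 = 1 - p + p * iexp u"
proof -
  have "q00 * (1 - p) + (1 - q11) * p = 1 - p" "(1 - q00) * (1 - p) + q11 * p = p"
    using stationary by (simp_all add: algebra_simps)
  then show ?thesis
    by (simp add: char_sum_def stationary_prob_def transition_prob_def flip: of_real_mult of_real_add)
qed

lemma transition_preserves_stationary_prob:
  "y \<in> {0, 1} \<Longrightarrow> (\<Sum>x\<in>{0,1}. transition_prob x y * stationary_prob x) = stationary_prob y"
  using stationary by (auto simp: transition_prob_def stationary_prob_def algebra_simps)

lemma char_part_at_0: "y \<in> {0, 1} \<Longrightarrow> char_part 0 m y = stationary_prob y"
proof (induction m arbitrary: y)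
  case (Suc m)
  then show ?case
    using transition_preserves_stationary_prob[OF Suc.prems] by (simp flip: of_real_mult of_real_add)
qed simp

lemma char_sum_at_0: "char_sum 0 m = 1"
  by (simp add: char_sum_def char_part_at_0 stationary_prob_def)

definition transfer_disc :: "real \<Rightarrow> complex" where
  "transfer_disc u = csqrt (transfer_trace u ^ 2 - 4 * transfer_det u)"

definition eig1 :: "real \<Rightarrow> complex" where
  "eig1 u = (transfer_trace u + transfer_disc u) / 2"

definition eig2 :: "real \<Rightarrow> complex" where
  "eig2 u = (transfer_trace u - transfer_disc u) / 2"

definition coef1 :: "real \<Rightarrow> complex" where
  "coef1 u = (char_sum u 1 - eig2 u) / (eig1 u - eig2 u)"

definition coef2 :: "real \<Rightarrow> complex" where
  "coef2 u = (eig1 u - char_sum u 1) / (eig1 u - eig2 u)"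

lemma eig1_plus_eig2: "eig1 u + eig2 u = transfer_trace u"
  by (simp add: eig1_def eig2_def field_simps)

lemma eig1_times_eig2: "eig1 u * eig2 u = transfer_det u"
proof -
  have "eig1 u * eig2 u = (transfer_trace u ^ 2 - transfer_disc u ^ 2) / 4"
    by (simp add: eig1_def eig2_def field_simps power2_eq_square)
  then show ?thesis by (simp add: transfer_disc_def)
qed

lemma char_sum_closed_form:
  assumes "eig1 u \<noteq> eig2 u"
  shows "char_sum u m = coef1 u * eig1 u ^ m + coef2 u * eig2 u ^ m"
proof -
  have "char_sum u 0 = 1" by (simp add: char_sum_def stationary_prob_def)
  moreover have "char_sum u (Suc (Suc k)) = (eig1 u + eig2 u) * char_sum u (Suc k)
                   - eig1 u * eig2 u * char_sum u k" for k
    by (simp add: eig1_plus_eig2 eig1_times_eig2 char_sum_Suc_Suc)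
  ultimately show ?thesis
    using linear_recurrence_closed_form[of "char_sum u" "eig1 u" "eig2 u" m] assms
    by (simp add: coef1_def coef2_def)
qed

lemma centered_char_sum_eq:
  assumes "eig1 u \<noteq> eig2 u"
  shows "iexp (- (p * u * real N)) * char_sum u N
           = coef1 u * (eig1 u * iexp (- (p * u))) ^ N + coef2 u * (eig2 u * iexp (- (p * u))) ^ N"
proof -
  have "iexp (- (p * u * real N)) = iexp (- (p * u)) ^ N"
    by (simp add: exp_of_nat_mult[symmetric] mult_ac)
  then show ?thesis
    by (simp add: char_sum_closed_form[OF assms] algebra_simps)
qed

lemma second_moment_identity:
  "q00 * p\<^sup>2 + q11 * (1 - p)\<^sup>2 - lam * (1 - 2 * p)\<^sup>2 = p * (1 - p) * (1 + lam)"
proof -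
  have q11_eq: "q11 = 1 - (1 - p) * (1 - q00) / p" using stationary p_pos by (simp add: field_simps)
  show ?thesis unfolding lam_def unfolding q11_eq using p_pos by (simp add: field_simps power2_eq_square)
qed

(* exp(-2ipu) times the characteristic polynomial of the transfer matrix, evaluated at exp(ipu). *)
definition shifted_char_poly :: "real \<Rightarrow> complex" where
  "shifted_char_poly u = 1 - transfer_trace u * iexp (- (p * u)) + transfer_det u * iexp (- (p * u)) ^ 2"

lemma eig1_shifted_factor:
  "(eig1 u * iexp (- (p * u)) - 1) * (eig1 u * iexp (- (p * u)) + 1 - transfer_trace u * iexp (- (p * u)))
     = - shifted_char_poly u"
proof -
  have "eig1 u ^ 2 - transfer_trace u * eig1 u + transfer_det u = 0"
    by (simp flip: eig1_plus_eig2 eig1_times_eig2 add: power2_eq_square algebra_simps)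
  moreover have "(eig1 u * iexp (- (p * u)) - 1) * (eig1 u * iexp (- (p * u)) + 1
        - transfer_trace u * iexp (- (p * u))) + shifted_char_poly u
      = iexp (- (p * u)) ^ 2 * (eig1 u ^ 2 - transfer_trace u * eig1 u + transfer_det u)"
    by (simp add: shifted_char_poly_def power2_eq_square algebra_simps)
  ultimately show ?thesis by (simp add: add_eq_0_iff)
qed

lemma shifted_char_poly_remainders:
  "shifted_char_poly u = - q00 * iexp_remainder (- p * u) - q11 * iexp_remainder ((1 - p) * u)
                         + lam * iexp_remainder ((1 - 2 * p) * u)"
proof -
  have "transfer_trace u * iexp (- (p * u)) = q00 * iexp (- p * u) + q11 * iexp ((1 - p) * u)"
    by (simp add: transfer_trace_def mult_exp_exp algebra_simps)
  moreover have "transfer_det u * iexp (- (p * u)) ^ 2 = lam * iexp ((1 - 2 * p) * u)"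
    by (simp add: transfer_det_def power2_eq_square mult_exp_exp algebra_simps)
  moreover have "q00 * p - q11 * (1 - p) + lam * (1 - 2 * p) = 0"
    using stationary by (simp add: lam_def algebra_simps)
  then have "\<i> * of_real u * of_real (q00 * p - q11 * (1 - p) + lam * (1 - 2 * p)) = 0"
    by simp
  ultimately show ?thesis
    by (simp add: shifted_char_poly_def iexp_remainder_def lam_def algebra_simps)
qed

lemma shifted_char_poly_limit:
  "((\<lambda>u. shifted_char_poly u / of_real (u\<^sup>2)) \<longlongrightarrow> of_real (p * (1 - p) * (1 + lam) / 2)) (at 0)"
proof -
  let ?r = "\<lambda>c u. iexp_remainder (c * u) / of_real (u\<^sup>2)"
  have split: "shifted_char_poly u / of_real (u\<^sup>2)
      = - of_real q00 * ?r (- p) u - of_real q11 * ?r (1 - p) u + of_real lam * ?r (1 - 2 * p) u" for u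
    by (simp add: shifted_char_poly_remainders diff_divide_distrib add_divide_distrib)
  have limit: "((\<lambda>u. - of_real q00 * ?r (- p) u - of_real q11 * ?r (1 - p) u + of_real lam * ?r (1 - 2 * p) u)
      \<longlongrightarrow> - of_real q00 * - of_real ((- p)\<^sup>2 / 2) - of_real q11 * - of_real ((1 - p)\<^sup>2 / 2)
          + of_real lam * - of_real ((1 - 2 * p)\<^sup>2 / 2)) (at 0)"
    by (intro tendsto_intros iexp_remainder_limit)
  have "- q00 * - ((- p)\<^sup>2 / 2) - q11 * - ((1 - p)\<^sup>2 / 2) + lam * - ((1 - 2 * p)\<^sup>2 / 2)
      = (q00 * p\<^sup>2 + q11 * (1 - p)\<^sup>2 - lam * (1 - 2 * p)\<^sup>2) / 2"
    by (simp add: algebra_simps)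
  also have "\<dots> = p * (1 - p) * (1 + lam) / 2"
    by (simp only: second_moment_identity)
  finally have real_value: "- q00 * - ((- p)\<^sup>2 / 2) - q11 * - ((1 - p)\<^sup>2 / 2) + lam * - ((1 - 2 * p)\<^sup>2 / 2)
      = p * (1 - p) * (1 + lam) / 2" .
  have "- of_real q00 * - of_real ((- p)\<^sup>2 / 2) - of_real q11 * - of_real ((1 - p)\<^sup>2 / 2)
        + of_real lam * - of_real ((1 - 2 * p)\<^sup>2 / 2)
      = (of_real (- q00 * - ((- p)\<^sup>2 / 2) - q11 * - ((1 - p)\<^sup>2 / 2) + lam * - ((1 - 2 * p)\<^sup>2 / 2)) :: complex)"
    by simp
  then have limit_value: "- of_real q00 * - of_real ((- p)\<^sup>2 / 2) - of_real q11 * - of_real ((1 - p)\<^sup>2 / 2)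
      + of_real lam * - of_real ((1 - 2 * p)\<^sup>2 / 2) = (of_real (p * (1 - p) * (1 + lam) / 2) :: complex)"
    unfolding real_value .
  show ?thesis unfolding split limit_value[symmetric] by (rule limit)
qed

end

locale ergodic_two_state_chain = two_state_chain +
  assumes lam_abs_less_1: "\<bar>q00 + q11 - 1\<bar> < 1"
begin

lemma lam_bounds: "-1 < lam" "lam < 1"
  using lam_abs_less_1 by (auto simp: lam_def)

definition limit_variance :: real where
  "limit_variance = p * (1 - p) * (1 + lam) / (1 - lam)"

lemma limit_variance_pos: "0 < limit_variance"
  using lam_bounds p_pos p_less_1 by (simp add: limit_variance_def)

lemma transfer_disc_at_0: "transfer_disc 0 = 1 - lam"
  and isCont_transfer_disc: "isCont transfer_disc 0"
proof -
  have disc: "transfer_trace 0 ^ 2 - 4 * transfer_det 0 = of_real ((1 - lam)\<^sup>2)"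
    by (simp add: transfer_trace_def transfer_det_def lam_def power2_eq_square algebra_simps)
  then show "transfer_disc 0 = 1 - lam"
    using lam_bounds by (simp add: transfer_disc_def csqrt_of_real)
  have "(1 - lam)\<^sup>2 > 0" using lam_bounds by simp
  then have "transfer_trace 0 ^ 2 - 4 * transfer_det 0 \<notin> \<real>\<^sub>\<le>\<^sub>0"
    unfolding disc by (simp add: complex_nonpos_Reals_iff)
  then show "isCont transfer_disc 0"
    unfolding transfer_disc_def transfer_trace_def transfer_det_def
    by (intro isCont_csqrt' continuous_intros) (simp add: transfer_trace_def transfer_det_def)
qed

lemma eig_at_0: "eig1 0 = 1" "eig2 0 = lam"
  by (simp_all add: eig1_def eig2_def transfer_disc_at_0 transfer_trace_def lam_def)

lemma isCont_eig: "isCont eig1 0" "isCont eig2 0"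
  unfolding eig1_def eig2_def transfer_trace_def
  by (intro continuous_intros isCont_transfer_disc; simp)+

lemma coef_at_0: "coef1 0 = 1" "coef2 0 = 0"
  using lam_bounds by (simp_all add: coef1_def coef2_def eig_at_0 char_sum_at_0)

lemma isCont_coef: "isCont coef1 0" "isCont coef2 0"
  using lam_bounds unfolding coef1_def coef2_def char_sum_1
  by (intro continuous_intros isCont_eig; simp add: eig_at_0)+

lemma eig1_centered_expansion:
  "((\<lambda>u. (eig1 u * iexp (- (p * u)) - 1) / of_real (u\<^sup>2)) \<longlongrightarrow> - of_real (limit_variance / 2)) (at 0)"
proof -
  define z where "z u = eig1 u * iexp (- (p * u))" for u
  define d where "d u = z u + 1 - transfer_trace u * iexp (- (p * u))" for u
  have "isCont d 0"
    unfolding d_def z_def transfer_trace_def by (intro continuous_intros isCont_eig)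
  then have d_lim: "(d \<longlongrightarrow> of_real (1 - lam)) (at 0)"
    by (simp add: isCont_def d_def z_def eig_at_0 transfer_trace_def lam_def) (simp add: algebra_simps)
  have d_nz: "of_real (1 - lam) \<noteq> (0 :: complex)" using lam_bounds by simp
  have "((\<lambda>u. - (shifted_char_poly u / of_real (u\<^sup>2)) / d u)
          \<longlongrightarrow> - of_real (p * (1 - p) * (1 + lam) / 2) / of_real (1 - lam)) (at 0)"
    by (intro tendsto_intros shifted_char_poly_limit d_lim d_nz)
  moreover have "\<forall>\<^sub>F u in at 0. - (shifted_char_poly u / of_real (u\<^sup>2)) / d u = (z u - 1) / of_real (u\<^sup>2)"
    using tendsto_imp_eventually_ne[OF d_lim d_nz]
  proof eventually_elim
    case (elim u)
    then have "z u - 1 = - shifted_char_poly u / d u"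
      using eig1_shifted_factor[of u] unfolding z_def d_def by (metis nonzero_mult_div_cancel_right)
    then show ?case by (simp add: mult.commute)
  qed
  ultimately have lim_z: "((\<lambda>u. (z u - 1) / of_real (u\<^sup>2))
      \<longlongrightarrow> - of_real (p * (1 - p) * (1 + lam) / 2) / of_real (1 - lam)) (at 0)"
    by (rule Lim_transform_eventually)
  have "- (p * (1 - p) * (1 + lam) / 2) / (1 - lam) = - (limit_variance / 2)"
    by (simp add: limit_variance_def)
  then have value_eq: "- of_real (p * (1 - p) * (1 + lam) / 2) / of_real (1 - lam)
      = (- of_real (limit_variance / 2) :: complex)"
    by (metis of_real_divide of_real_minus)
  show ?thesis using lim_z unfolding value_eq z_def .
qed

lemma dominant_power_limit:
  assumes "t \<noteq> 0"
  shows "(\<lambda>n. (eig1 (t / sqrt (real n + 1)) * iexp (- (p * (t / sqrt (real n + 1))))) ^ Suc n)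
           \<longlonglongrightarrow> of_real (exp (- (limit_variance * t\<^sup>2) / 2))"
proof -
  define u where "u n = t / sqrt (real n + 1)" for n
  have u_lim: "u \<longlonglongrightarrow> 0" unfolding u_def by real_asymp
  have u_at_0: "filterlim u (at 0) sequentially"
    using assms by (intro filterlim_atI u_lim) (simp add: u_def)
  have "(\<lambda>n. (eig1 (u n) * iexp (- (p * u n))) ^ Suc n) \<longlonglongrightarrow> exp (of_real (- (limit_variance * t\<^sup>2) / 2))"
  proof (rule tendsto_power_exp)
    show "(\<lambda>n. eig1 (u n) * iexp (- (p * u n))) \<longlonglongrightarrow> 1"
      using isCont_tendsto_compose[OF isCont_eig(1) u_lim] u_lim
      by (auto simp: eig_at_0 intro!: tendsto_eq_intros)
    have scaled_lim: "(\<lambda>n. of_real (t\<^sup>2) * ((eig1 (u n) * iexp (- (p * u n)) - 1) / of_real ((u n)\<^sup>2)))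
        \<longlonglongrightarrow> of_real (t\<^sup>2) * - of_real (limit_variance / 2)"
      by (intro tendsto_intros filterlim_compose[OF eig1_centered_expansion u_at_0])
    have scale_eq: "of_real (t\<^sup>2) * ((eig1 (u n) * iexp (- (p * u n)) - 1) / of_real ((u n)\<^sup>2))
        = of_nat (Suc n) * (eig1 (u n) * iexp (- (p * u n)) - 1)" for n
    proof -
      have "t\<^sup>2 / (u n)\<^sup>2 = real (Suc n)"
        using assms by (simp add: u_def power_divide)
      then have "of_real (t\<^sup>2) / of_real ((u n)\<^sup>2) = (of_nat (Suc n) :: complex)"
        by (metis of_real_divide of_real_of_nat_eq)
      then show ?thesis by (metis times_divide_eq_left times_divide_eq_right)
    qed
    have limit_eq: "of_real (t\<^sup>2) * - of_real (limit_variance / 2)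
        = (of_real (- (limit_variance * t\<^sup>2) / 2) :: complex)"
      by simp
    show "(\<lambda>n. of_nat (Suc n) * (eig1 (u n) * iexp (- (p * u n)) - 1))
        \<longlonglongrightarrow> of_real (- (limit_variance * t\<^sup>2) / 2)"
      using scaled_lim unfolding scale_eq limit_eq .
  qed
  then show ?thesis unfolding u_def exp_of_real .
qed

lemma subdominant_term_vanishes:
  assumes u_lim: "u \<longlonglongrightarrow> 0"
  shows "(\<lambda>n. coef2 (u n) * (eig2 (u n) * iexp (- (p * u n))) ^ Suc n) \<longlonglongrightarrow> 0"
proof (rule Lim_null_comparison)
  have "(\<lambda>n. norm (eig2 (u n))) \<longlonglongrightarrow> \<bar>lam\<bar>"
    using tendsto_norm[OF isCont_tendsto_compose[OF isCont_eig(2) u_lim]] by (simp add: eig_at_0)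
  then have "\<forall>\<^sub>F n in sequentially. norm (eig2 (u n)) < 1"
    using order_tendstoD(2) lam_bounds by fastforce
  then show "\<forall>\<^sub>F n in sequentially.
      norm (coef2 (u n) * (eig2 (u n) * iexp (- (p * u n))) ^ Suc n) \<le> norm (coef2 (u n))"
  proof eventually_elim
    case (elim n)
    then have "norm (eig2 (u n) * iexp (- (p * u n))) ^ Suc n \<le> 1"
      by (intro power_le_one) (simp_all add: norm_mult)
    then show ?case by (simp add: norm_mult norm_power mult_left_le)
  qed
  have "(\<lambda>n. coef2 (u n)) \<longlonglongrightarrow> 0"
    using isCont_tendsto_compose[OF isCont_coef(2) u_lim] by (simp add: coef_at_0)
  then show "(\<lambda>n. norm (coef2 (u n))) \<longlonglongrightarrow> 0"
    by (rule tendsto_norm_zero)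
qed

lemma centered_char_sum_limit:
  "(\<lambda>n. iexp (- (p * t * sqrt (real n + 1))) * char_sum (t / sqrt (real n + 1)) (Suc n))
     \<longlonglongrightarrow> of_real (exp (- (limit_variance * t\<^sup>2) / 2))"
proof (cases "t = 0")
  case True
  then show ?thesis by (simp add: char_sum_at_0)
next
  case False
  define u where "u n = t / sqrt (real n + 1)" for n
  have u_lim: "u \<longlonglongrightarrow> 0" unfolding u_def by real_asymp
  have "(\<lambda>n. coef1 (u n) * (eig1 (u n) * iexp (- (p * u n))) ^ Suc n
              + coef2 (u n) * (eig2 (u n) * iexp (- (p * u n))) ^ Suc n)
      \<longlonglongrightarrow> 1 * of_real (exp (- (limit_variance * t\<^sup>2) / 2)) + 0"
    using isCont_tendsto_compose[OF isCont_coef(1) u_lim] dominant_power_limit[OF False]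
      subdominant_term_vanishes[OF u_lim]
    by (intro tendsto_intros) (simp_all add: coef_at_0 u_def)
  moreover have "\<forall>\<^sub>F n in sequentially. eig1 (u n) \<noteq> eig2 (u n)"
  proof -
    have "(\<lambda>n. eig1 (u n) - eig2 (u n)) \<longlonglongrightarrow> eig1 0 - eig2 0"
      by (intro tendsto_intros isCont_tendsto_compose[OF _ u_lim] isCont_eig)
    moreover have "eig1 0 - eig2 0 \<noteq> 0" using lam_bounds by (simp add: eig_at_0)
    ultimately show ?thesis by (rule tendsto_imp_eventually_ne[THEN eventually_mono]) simp
  qed
  then have "\<forall>\<^sub>F n in sequentially. coef1 (u n) * (eig1 (u n) * iexp (- (p * u n))) ^ Suc n
              + coef2 (u n) * (eig2 (u n) * iexp (- (p * u n))) ^ Suc n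
            = iexp (- (p * t * sqrt (real n + 1))) * char_sum (t / sqrt (real n + 1)) (Suc n)"
  proof eventually_elim
    case (elim n)
    have "p * t * sqrt (real n + 1) = p * u n * real (Suc n)"
      by (simp add: u_def field_simps real_sqrt_mult[symmetric])
    then show ?case using centered_char_sum_eq[OF elim, of "Suc n"] by (simp add: u_def)
  qed
  ultimately show ?thesis
    by (rule Lim_transform_eventually[THEN tendsto_eq_rhs]) simp
qed

end

section \<open>Binary Markov chains: decomposition along sample paths\<close>

locale binary_markov_chain = prob_space M + two_state_chain q00 q11 p
  for M :: "'s measure" and q00 q11 p :: real +
  fixes Y :: "nat \<Rightarrow> 's \<Rightarrow> real"
  assumes Y_measurable [measurable]: "\<And>t. Y t \<in> borel_measurable M"
    and Y_binary: "\<And>t \<omega>. Y t \<omega> \<in> {0, 1}"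
    and Y_markov: "discrete_markov M Y"
    and Y_marginal: "\<And>t x. x \<in> {0, 1} \<Longrightarrow> prob {\<omega> \<in> space M. Y t \<omega> = x} = stationary_prob x"
    and Y_transition: "\<And>t x y. x \<in> {0, 1} \<Longrightarrow> y \<in> {0, 1} \<Longrightarrow>
           prob {\<omega> \<in> space M. Y t \<omega> = x \<and> Y (Suc t) \<omega> = y} = stationary_prob x * transition_prob x y"
begin

definition binary_paths :: "nat \<Rightarrow> (nat \<Rightarrow> real) set" where
  "binary_paths n = PiE {..n} (\<lambda>_. {0, 1})"

definition sample_path :: "nat \<Rightarrow> 's \<Rightarrow> nat \<Rightarrow> real" where
  "sample_path n \<omega> = restrict (\<lambda>i. Y i \<omega>) {..n}"

definition cylinder :: "nat \<Rightarrow> (nat \<Rightarrow> real) \<Rightarrow> 's set" where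
  "cylinder n xs = {\<omega> \<in> space M. \<forall>i\<le>n. Y i \<omega> = xs i}"

lemma finite_binary_paths: "finite (binary_paths n)"
  by (simp add: binary_paths_def finite_PiE)

lemma sample_path_in_binary_paths: "sample_path n \<omega> \<in> binary_paths n"
  using Y_binary by (auto simp: binary_paths_def sample_path_def)

lemma sets_cylinder [measurable]: "cylinder n xs \<in> sets M"
  unfolding cylinder_def by measurable

lemma mem_cylinder_iff:
  assumes "xs \<in> binary_paths n" "\<omega> \<in> space M"
  shows "\<omega> \<in> cylinder n xs \<longleftrightarrow> sample_path n \<omega> = xs"
  using assms by (auto simp: cylinder_def sample_path_def binary_paths_def PiE_def extensional_def fun_eq_iff)

lemma integral_path_indicator:
  fixes h :: "(nat \<Rightarrow> real) \<Rightarrow> complex"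
  assumes A: "A \<in> sets M"
  shows "(\<integral>\<omega>. indicator A \<omega> *\<^sub>R h (sample_path n \<omega>) \<partial>M)
           = (\<Sum>xs\<in>binary_paths n. prob (cylinder n xs \<inter> A) *\<^sub>R h xs)"
proof -
  have "(\<integral>\<omega>. indicator A \<omega> *\<^sub>R h (sample_path n \<omega>) \<partial>M)
      = (\<integral>\<omega>. (\<Sum>xs\<in>binary_paths n. indicator (cylinder n xs \<inter> A) \<omega> *\<^sub>R h xs) \<partial>M)"
  proof (rule Bochner_Integration.integral_cong[OF refl])
    fix \<omega> assume \<omega>: "\<omega> \<in> space M"
    have "(\<Sum>xs\<in>binary_paths n. indicator (cylinder n xs \<inter> A) \<omega> *\<^sub>R h xs)
        = (\<Sum>xs\<in>binary_paths n. if sample_path n \<omega> = xs then indicator A \<omega> *\<^sub>R h xs else 0)"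
      using mem_cylinder_iff[OF _ \<omega>] by (intro sum.cong) (auto simp: indicator_def)
    also have "\<dots> = indicator A \<omega> *\<^sub>R h (sample_path n \<omega>)"
      using sample_path_in_binary_paths finite_binary_paths by simp
    finally show "indicator A \<omega> *\<^sub>R h (sample_path n \<omega>)
        = (\<Sum>xs\<in>binary_paths n. indicator (cylinder n xs \<inter> A) \<omega> *\<^sub>R h xs)" ..
  qed
  also have "\<dots> = (\<Sum>xs\<in>binary_paths n. (\<integral>\<omega>. indicator (cylinder n xs \<inter> A) \<omega> *\<^sub>R h xs \<partial>M))"
    using A by (intro Bochner_Integration.integral_sum integrable_indicator) (auto simp flip: less_top)
  also have "\<dots> = (\<Sum>xs\<in>binary_paths n. prob (cylinder n xs \<inter> A) *\<^sub>R h xs)"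
    using A by (intro sum.cong refl has_bochner_integral_integral_eq has_bochner_integral_indicator)
      (auto simp flip: less_top)
  finally show ?thesis .
qed

lemma prob_cylinder_Suc:
  assumes xs: "xs \<in> binary_paths n" and y: "y \<in> {0, 1}"
  shows "prob (cylinder n xs \<inter> {\<omega> \<in> space M. Y (Suc n) \<omega> = y})
           = prob (cylinder n xs) * transition_prob (xs n) y"
proof -
  define xs' where "xs' = xs(Suc n := y)"
  have xn: "xs n \<in> {0, 1}" using xs by (auto simp: binary_paths_def)
  have "{\<omega> \<in> space M. \<forall>i\<le>Suc n. Y i \<omega> = xs' i} = cylinder n xs \<inter> {\<omega> \<in> space M. Y (Suc n) \<omega> = y}"
    by (auto simp: xs'_def cylinder_def le_Suc_eq)
  moreover have "{\<omega> \<in> space M. \<forall>i\<le>n. Y i \<omega> = xs' i} = cylinder n xs"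
    by (auto simp: xs'_def cylinder_def)
  moreover have "xs' n = xs n" "xs' (Suc n) = y"
    by (simp_all add: xs'_def)
  ultimately have "prob (cylinder n xs \<inter> {\<omega> \<in> space M. Y (Suc n) \<omega> = y}) * stationary_prob (xs n)
      = prob (cylinder n xs) * (stationary_prob (xs n) * transition_prob (xs n) y)"
    using Y_markov[unfolded discrete_markov_def, rule_format, of n xs']
    by (simp add: Y_marginal[OF xn] Y_transition[OF xn y])
  moreover have "stationary_prob (xs n) > 0"
    using xn p_pos p_less_1 by (auto simp: stationary_prob_def)
  ultimately show ?thesis by simp
qed

lemma integral_markov_step:
  fixes h :: "(nat \<Rightarrow> real) \<Rightarrow> complex"
  assumes y: "y \<in> {0, 1}"
  shows "(\<integral>\<omega>. indicator {\<omega> \<in> space M. Y (Suc n) \<omega> = y} \<omega> *\<^sub>R h (sample_path n \<omega>) \<partial>M)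
    = (\<Sum>x\<in>{0,1}. transition_prob x y *\<^sub>R
         (\<integral>\<omega>. indicator {\<omega> \<in> space M. Y n \<omega> = x} \<omega> *\<^sub>R h (sample_path n \<omega>) \<partial>M))"
proof -
  have current: "(\<integral>\<omega>. indicator {\<omega> \<in> space M. Y n \<omega> = x} \<omega> *\<^sub>R h (sample_path n \<omega>) \<partial>M)
      = (\<Sum>xs\<in>binary_paths n. (if xs n = x then prob (cylinder n xs) else 0) *\<^sub>R h xs)" for x
  proof -
    have "cylinder n xs \<inter> {\<omega> \<in> space M. Y n \<omega> = x} = (if xs n = x then cylinder n xs else {})" for xs
      by (auto simp: cylinder_def)
    then have "prob (cylinder n xs \<inter> {\<omega> \<in> space M. Y n \<omega> = x})
        = (if xs n = x then prob (cylinder n xs) else 0)" for xs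
      by simp
    then show ?thesis by (simp add: integral_path_indicator)
  qed
  have "(\<integral>\<omega>. indicator {\<omega> \<in> space M. Y (Suc n) \<omega> = y} \<omega> *\<^sub>R h (sample_path n \<omega>) \<partial>M)
      = (\<Sum>xs\<in>binary_paths n. (prob (cylinder n xs) * transition_prob (xs n) y) *\<^sub>R h xs)"
    by (simp add: integral_path_indicator prob_cylinder_Suc[OF _ y] cong: sum.cong)
  also have "\<dots> = (\<Sum>xs\<in>binary_paths n. \<Sum>x\<in>{0,1}.
      transition_prob x y *\<^sub>R (if xs n = x then prob (cylinder n xs) else 0) *\<^sub>R h xs)"
  proof (rule sum.cong[OF refl])
    fix xs assume "xs \<in> binary_paths n"
    then have "xs n = 0 \<or> xs n = 1" by (auto simp: binary_paths_def)
    then show "(prob (cylinder n xs) * transition_prob (xs n) y) *\<^sub>R h xs = (\<Sum>x\<in>{0,1}.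
        transition_prob x y *\<^sub>R (if xs n = x then prob (cylinder n xs) else 0) *\<^sub>R h xs)"
      by auto
  qed
  also have "\<dots> = (\<Sum>x\<in>{0,1}. transition_prob x y *\<^sub>R
      (\<integral>\<omega>. indicator {\<omega> \<in> space M. Y n \<omega> = x} \<omega> *\<^sub>R h (sample_path n \<omega>) \<partial>M))"
    unfolding current scaleR_sum_right by (rule sum.swap)
  finally show ?thesis .
qed

lemma sum_sample_path: "(\<Sum>i\<le>n. sample_path n \<omega> i) = (\<Sum>i\<le>n. Y i \<omega>)"
  by (simp add: sample_path_def)

lemma integral_char_part:
  assumes "y \<in> {0, 1}"
  shows "(\<integral>\<omega>. indicator {\<omega> \<in> space M. Y n \<omega> = y} \<omega> *\<^sub>R iexp (u * (\<Sum>i\<le>n. Y i \<omega>)) \<partial>M)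
           = char_part u (Suc n) y"
  using assms
proof (induction n arbitrary: y)
  case 0
  have "(\<integral>\<omega>. indicator {\<omega> \<in> space M. Y 0 \<omega> = y} \<omega> *\<^sub>R iexp (u * (\<Sum>i\<le>0. Y i \<omega>)) \<partial>M)
      = (\<integral>\<omega>. indicator {\<omega> \<in> space M. Y 0 \<omega> = y} \<omega> *\<^sub>R iexp (u * y) \<partial>M)"
    by (intro Bochner_Integration.integral_cong) (auto simp: indicator_def)
  also have "\<dots> = stationary_prob y *\<^sub>R iexp (u * y)"
    using Y_marginal[OF 0] by (simp flip: less_top)
  finally show ?case
    using transition_preserves_stationary_prob[OF 0]
    by (simp add: scaleR_conv_of_real mult.commute flip: of_real_mult of_real_add)
next
  case (Suc n)
  let ?h = "\<lambda>xs. iexp (u * (\<Sum>i\<le>n. xs i))"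
  have "(\<integral>\<omega>. indicator {\<omega> \<in> space M. Y (Suc n) \<omega> = y} \<omega> *\<^sub>R iexp (u * (\<Sum>i\<le>Suc n. Y i \<omega>)) \<partial>M)
      = (\<integral>\<omega>. iexp (u * y) * (indicator {\<omega> \<in> space M. Y (Suc n) \<omega> = y} \<omega> *\<^sub>R ?h (sample_path n \<omega>)) \<partial>M)"
    by (intro Bochner_Integration.integral_cong)
      (auto simp: indicator_def sum_sample_path distrib_left mult_exp_exp add_ac)
  also have "\<dots> = iexp (u * y)
      * (\<integral>\<omega>. indicator {\<omega> \<in> space M. Y (Suc n) \<omega> = y} \<omega> *\<^sub>R ?h (sample_path n \<omega>) \<partial>M)"
    by (rule integral_mult_right_zero)
  also have "\<dots> = iexp (u * y) * (\<Sum>x\<in>{0,1}. transition_prob x y *\<^sub>R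
      (\<integral>\<omega>. indicator {\<omega> \<in> space M. Y n \<omega> = x} \<omega> *\<^sub>R ?h (sample_path n \<omega>) \<partial>M))"
    by (simp only: integral_markov_step[OF Suc.prems, where h = ?h])
  also have "\<dots> = iexp (u * y) * (\<Sum>x\<in>{0,1}. transition_prob x y *\<^sub>R char_part u (Suc n) x)"
    using Suc.IH by (simp add: sum_sample_path del: char_part.simps)
  finally show ?case by (simp add: scaleR_conv_of_real)
qed

lemma char_partial_sum:
  "(\<integral>\<omega>. iexp (u * (\<Sum>i\<le>n. Y i \<omega>)) \<partial>M) = char_sum u (Suc n)"
proof -
  let ?f = "\<lambda>\<omega>. iexp (u * (\<Sum>i\<le>n. Y i \<omega>))"
  have integrable: "integrable M (\<lambda>\<omega>. indicator {\<omega> \<in> space M. Y n \<omega> = y} \<omega> *\<^sub>R ?f \<omega>)" for y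
    by (intro integrable_const_bound[where B = 1] AE_I2) (auto simp: indicator_def)
  have "(\<integral>\<omega>. ?f \<omega> \<partial>M)
      = (\<integral>\<omega>. indicator {\<omega> \<in> space M. Y n \<omega> = 0} \<omega> *\<^sub>R ?f \<omega>
            + indicator {\<omega> \<in> space M. Y n \<omega> = 1} \<omega> *\<^sub>R ?f \<omega> \<partial>M)"
    using Y_binary by (intro Bochner_Integration.integral_cong) (auto simp: indicator_def)
  also have "\<dots> = (\<integral>\<omega>. indicator {\<omega> \<in> space M. Y n \<omega> = 0} \<omega> *\<^sub>R ?f \<omega> \<partial>M)
      + (\<integral>\<omega>. indicator {\<omega> \<in> space M. Y n \<omega> = 1} \<omega> *\<^sub>R ?f \<omega> \<partial>M)"
    by (rule Bochner_Integration.integral_add[OF integrable integrable])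
  also have "\<dots> = char_part u (Suc n) 0 + char_part u (Suc n) 1"
    using integral_char_part[of 0 n u] integral_char_part[of 1 n u] by (simp del: char_part.simps)
  finally show ?thesis by (simp add: char_sum_def)
qed

end

section \<open>The copula chain with Bernoulli marginals\<close>

lemma cdf_bernoulli_of_bool:
  assumes "0 \<le> p" "p \<le> 1"
  shows "cdf (distr (measure_pmf (bernoulli_pmf p)) borel of_bool) x = bernoulli_cdf p x"
proof -
  have "cdf (distr (measure_pmf (bernoulli_pmf p)) borel of_bool) x
      = measure_pmf.prob (bernoulli_pmf p) {b. of_bool b \<le> x}"
    by (simp add: cdf_def2 measure_distr vimage_def)
  also have "\<dots> = bernoulli_cdf p x"
  proof -
    consider "x < 0" | "0 \<le> x" "x < 1" | "1 \<le> x" by linarith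
    then show ?thesis
    proof cases
      case 2
      then have "{b. of_bool b \<le> x} = {False}" by auto
      then show ?thesis using 2 assms by (simp add: bernoulli_cdf_def measure_pmf_single)
    qed (auto simp: bernoulli_cdf_def measure_pmf.prob_space)
  qed
  finally show ?thesis .
qed

lemma (in prob_space) AE_binary_if_bernoulli_cdf:
  fixes Z :: "'a \<Rightarrow> real"
  assumes Z: "random_variable borel Z" and p: "0 \<le> p" "p \<le> 1"
    and cdf_Z: "\<And>x. prob {\<omega> \<in> space M. Z \<omega> \<le> x} = bernoulli_cdf p x"
  shows "AE \<omega> in M. Z \<omega> \<in> {0, 1}"
proof -
  define B where "B = distr (measure_pmf (bernoulli_pmf p)) borel (of_bool :: bool \<Rightarrow> real)"
  have "real_distribution B"
    unfolding B_def by (intro prob_space.real_distribution_distr) (simp_all add: measure_pmf.prob_space_axioms)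
  moreover have "cdf (distr M borel Z) x = cdf B x" for x
  proof -
    have "cdf (distr M borel Z) x = bernoulli_cdf p x"
      using cdf_Z Z by (simp add: cdf_def2 measure_distr vimage_def Int_def conj_commute)
    then show ?thesis unfolding B_def cdf_bernoulli_of_bool[OF p] .
  qed
  ultimately have law: "distr M borel Z = B"
    using Z by (intro cdf_unique) auto
  have "prob {\<omega> \<in> space M. Z \<omega> \<in> {0, 1}} = measure (distr M borel Z) {0, 1}"
    using Z by (simp add: measure_distr vimage_def Int_def conj_commute)
  also have "\<dots> = 1"
    by (simp add: law B_def measure_distr vimage_def measure_pmf.prob_space)
  finally show ?thesis by (rule AE_prob_1[THEN AE_mp]) auto
qed

locale mix_copula_bernoulli_chain =
  fixes M :: "'s measure" and X :: "nat \<Rightarrow> 's \<Rightarrow> real" and a p :: real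
  assumes a_pos: "0 < a" and a_less_1: "a < 1" and p_pos: "0 < p" and p_less_1: "p < 1"
    and chain: "copula_markov_chain M X (mix_copula a) (bernoulli_cdf p)"
begin

sublocale prob_space M
  using chain by (simp add: copula_markov_chain_def)

lemma X_measurable [measurable]: "X t \<in> borel_measurable M"
  and X_markov: "discrete_markov M X"
  and X_cdf: "prob {\<omega> \<in> space M. X t \<omega> \<le> x} = bernoulli_cdf p x"
  and X_joint_cdf: "prob {\<omega> \<in> space M. X t \<omega> \<le> x \<and> X (Suc t) \<omega> \<le> y}
                      = mix_copula a (bernoulli_cdf p x) (bernoulli_cdf p y)"
  using chain by (simp_all add: copula_markov_chain_def)

(* X modified on a null set so that it is {0,1}-valued everywhere. *)
definition X_bin :: "nat \<Rightarrow> 's \<Rightarrow> real" where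
  "X_bin t \<omega> = of_bool (0 < X t \<omega>)"

lemma X_bin_measurable [measurable]: "X_bin t \<in> borel_measurable M"
  unfolding X_bin_def by measurable

lemma AE_X_eq_X_bin: "AE \<omega> in M. \<forall>t. X t \<omega> = X_bin t \<omega>"
proof -
  have "AE \<omega> in M. X t \<omega> = X_bin t \<omega>" for t
  proof -
    have "AE \<omega> in M. X t \<omega> \<in> {0, 1}"
      by (rule AE_binary_if_bernoulli_cdf[OF X_measurable _ _ X_cdf]) (use p_pos p_less_1 in auto)
    then show ?thesis by eventually_elim (auto simp: X_bin_def)
  qed
  then show ?thesis by (simp add: AE_all_countable)
qed

lemma prob_X_eq_prob_X_bin:
  assumes "Measurable.pred M (\<lambda>\<omega>. Q (\<lambda>i. X i \<omega>))" "Measurable.pred M (\<lambda>\<omega>. Q (\<lambda>i. X_bin i \<omega>))"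
  shows "prob {\<omega> \<in> space M. Q (\<lambda>i. X i \<omega>)} = prob {\<omega> \<in> space M. Q (\<lambda>i. X_bin i \<omega>)}"
proof (rule finite_measure_eq_AE)
  show "AE \<omega> in M. \<omega> \<in> {\<omega> \<in> space M. Q (\<lambda>i. X i \<omega>)} \<longleftrightarrow> \<omega> \<in> {\<omega> \<in> space M. Q (\<lambda>i. X_bin i \<omega>)}"
    using AE_X_eq_X_bin by eventually_elim auto
qed (use assms in auto)

definition prob00 :: real where
  "prob00 = mix_copula a (1 - p) (1 - p)"

definition q00 :: real where
  "q00 = prob00 / (1 - p)"

definition q11 :: real where
  "q11 = (2 * p - 1 + prob00) / p"

lemma q00_plus_q11_minus_1:
  "q00 + q11 - 1 = (if p < 1/2 then (a - p) / (1 - p) else (a + p - 1) / p)"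
  using p_pos p_less_1
  by (auto simp: q00_def q11_def prob00_def mix_copula_def max_def field_simps)

sublocale chain: ergodic_two_state_chain q00 q11 p
proof
  show "0 < p" "p < 1" by (fact p_pos, fact p_less_1)
  show "(1 - p) * (1 - q00) = p * (1 - q11)"
    using p_pos p_less_1 by (simp add: q00_def q11_def field_simps)
  show "\<bar>q00 + q11 - 1\<bar> < 1"
    using a_pos a_less_1 p_pos p_less_1
    by (auto simp: q00_plus_q11_minus_1 abs_less_iff divide_simps)
qed

lemma limit_variance_eq:
  "chain.limit_variance = (if p < 1/2 then p * (1 - p) * (1 + a - 2 * p) / (1 - a)
                        else p * (1 - p) * (a + 2 * p - 1) / (1 - a))"
proof (cases "p < 1/2")
  case True
  then have "1 + chain.lam = (1 + a - 2 * p) / (1 - p)" "1 - chain.lam = (1 - a) / (1 - p)"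
    using p_less_1 by (simp_all add: chain.lam_def q00_plus_q11_minus_1 field_simps)
  then show ?thesis using True p_less_1 a_less_1 by (simp add: chain.limit_variance_def)
next
  case False
  then have "1 + chain.lam = (a + 2 * p - 1) / p" "1 - chain.lam = (1 - a) / p"
    using p_pos by (simp_all add: chain.lam_def q00_plus_q11_minus_1 field_simps)
  then show ?thesis using False p_pos a_less_1 by (simp add: chain.limit_variance_def)
qed

lemma prob_X_bin_marginal:
  "prob {\<omega> \<in> space M. X_bin t \<omega> = 0} = 1 - p" "prob {\<omega> \<in> space M. X_bin t \<omega> = 1} = p"
proof -
  have "{\<omega> \<in> space M. X_bin t \<omega> = 0} = {\<omega> \<in> space M. X t \<omega> \<le> 0}"
    by (auto simp: X_bin_def)
  then show zero: "prob {\<omega> \<in> space M. X_bin t \<omega> = 0} = 1 - p"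
    by (simp add: X_cdf bernoulli_cdf_def)
  have "{\<omega> \<in> space M. X_bin t \<omega> = 1} = space M - {\<omega> \<in> space M. X_bin t \<omega> = 0}"
    by (auto simp: X_bin_def)
  then show "prob {\<omega> \<in> space M. X_bin t \<omega> = 1} = p"
    by (simp add: prob_compl zero)
qed

lemma prob_split_X_bin:
  assumes "Measurable.pred M Q"
  shows "prob {\<omega> \<in> space M. Q \<omega>}
           = prob {\<omega> \<in> space M. Q \<omega> \<and> X_bin s \<omega> = 0} + prob {\<omega> \<in> space M. Q \<omega> \<and> X_bin s \<omega> = 1}"
proof -
  have "{\<omega> \<in> space M. Q \<omega>}
      = {\<omega> \<in> space M. Q \<omega> \<and> X_bin s \<omega> = 0} \<union> {\<omega> \<in> space M. Q \<omega> \<and> X_bin s \<omega> = 1}"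
    by (auto simp: X_bin_def)
  moreover have "{\<omega> \<in> space M. Q \<omega> \<and> X_bin s \<omega> = c} \<in> sets M" for c
    using assms by measurable
  ultimately show ?thesis by (simp add: finite_measure_Union disjoint_iff)
qed

lemma prob_X_bin_pair:
  assumes "x \<in> {0, 1}" "y \<in> {0, 1}"
  shows "prob {\<omega> \<in> space M. X_bin t \<omega> = x \<and> X_bin (Suc t) \<omega> = y}
           = chain.stationary_prob x * chain.transition_prob x y"
proof -
  define P where "P x y = prob {\<omega> \<in> space M. X_bin t \<omega> = x \<and> X_bin (Suc t) \<omega> = y}" for x y
  have "{\<omega> \<in> space M. X_bin t \<omega> = 0 \<and> X_bin (Suc t) \<omega> = 0}
      = {\<omega> \<in> space M. X t \<omega> \<le> 0 \<and> X (Suc t) \<omega> \<le> 0}"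
    by (auto simp: X_bin_def)
  then have P00: "P 0 0 = prob00"
    by (simp add: P_def X_joint_cdf bernoulli_cdf_def prob00_def)
  have "1 - p = P 0 0 + P 0 1" "1 - p = P 0 0 + P 1 0" "p = P 1 0 + P 1 1"
    using prob_split_X_bin[of "\<lambda>\<omega>. X_bin t \<omega> = 0" "Suc t"]
      prob_split_X_bin[of "\<lambda>\<omega>. X_bin (Suc t) \<omega> = 0" t]
      prob_split_X_bin[of "\<lambda>\<omega>. X_bin t \<omega> = 1" "Suc t"]
    by (auto simp: P_def prob_X_bin_marginal conj_commute)
  with P00 have P_values: "P 0 1 = 1 - p - prob00" "P 1 0 = 1 - p - prob00" "P 1 1 = 2 * p - 1 + prob00"
    by linarith+
  from assms have "P x y = chain.stationary_prob x * chain.transition_prob x y"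
    by (auto simp: chain.stationary_prob_def chain.transition_prob_def)
      (use p_pos p_less_1 in \<open>simp_all add: P00 P_values q00_def q11_def field_simps\<close>)
  then show ?thesis by (simp add: P_def)
qed

lemma X_bin_markov: "discrete_markov M X_bin"
proof -
  have "prob {\<omega> \<in> space M. \<forall>i\<le>Suc t. X_bin i \<omega> = x i} * prob {\<omega> \<in> space M. X_bin t \<omega> = x t}
      = prob {\<omega> \<in> space M. \<forall>i\<le>t. X_bin i \<omega> = x i}
        * prob {\<omega> \<in> space M. X_bin t \<omega> = x t \<and> X_bin (Suc t) \<omega> = x (Suc t)}" for t x
    using X_markov[unfolded discrete_markov_def, rule_format, of t x]
      prob_X_eq_prob_X_bin[of "\<lambda>f. \<forall>i\<le>Suc t. f i = x i"] prob_X_eq_prob_X_bin[of "\<lambda>f. f t = x t"]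
      prob_X_eq_prob_X_bin[of "\<lambda>f. \<forall>i\<le>t. f i = x i"]
      prob_X_eq_prob_X_bin[of "\<lambda>f. f t = x t \<and> f (Suc t) = x (Suc t)"]
    by simp
  then show ?thesis by (simp add: discrete_markov_def)
qed

sublocale markov: binary_markov_chain M q00 q11 p X_bin
proof
  show "X_bin t \<in> borel_measurable M" for t by measurable
  show "X_bin t \<omega> \<in> {0, 1}" for t \<omega> by (simp add: X_bin_def)
  show "discrete_markov M X_bin" by (rule X_bin_markov)
  show "prob {\<omega> \<in> space M. X_bin t \<omega> = x} = chain.stationary_prob x" if "x \<in> {0, 1}" for t x
    using that by (auto simp: prob_X_bin_marginal chain.stationary_prob_def)
  show "prob {\<omega> \<in> space M. X_bin t \<omega> = x \<and> X_bin (Suc t) \<omega> = y}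
          = chain.stationary_prob x * chain.transition_prob x y" if "x \<in> {0, 1}" "y \<in> {0, 1}" for t x y
    using that by (rule prob_X_bin_pair)
qed

lemma char_normalized_sum:
  "char (distr M borel (\<lambda>\<omega>. sqrt (real n + 1) * ((\<Sum>t\<le>n. X t \<omega>) / (real n + 1) - p))) t
     = iexp (- (p * t * sqrt (real n + 1))) * chain.char_sum (t / sqrt (real n + 1)) (Suc n)"
proof -
  define N where "N = real n + 1"
  have "sqrt N * (S / N) = S / sqrt N" for S
    by (simp add: N_def field_simps real_sqrt_mult[symmetric])
  then have rescale: "t * (sqrt N * (S / N - p)) = - (p * t * sqrt N) + t / sqrt N * S" for S
    by (simp add: algebra_simps)
  have "char (distr M borel (\<lambda>\<omega>. sqrt N * ((\<Sum>t\<le>n. X t \<omega>) / N - p))) t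
      = (\<integral>\<omega>. iexp (t * (sqrt N * ((\<Sum>t\<le>n. X_bin t \<omega>) / N - p))) \<partial>M)"
    unfolding char_def using AE_X_eq_X_bin
    by (subst integral_distr) (auto intro!: integral_cong_AE)
  also have "\<dots> = (\<integral>\<omega>. iexp (- (p * t * sqrt N)) * iexp (t / sqrt N * (\<Sum>i\<le>n. X_bin i \<omega>)) \<partial>M)"
    by (intro Bochner_Integration.integral_cong refl)
      (simp only: rescale of_real_add distrib_left exp_add)
  also have "\<dots> = iexp (- (p * t * sqrt N)) * chain.char_sum (t / sqrt N) (Suc n)"
    by (simp only: integral_mult_right_zero markov.char_partial_sum)
  finally show ?thesis by (simp add: N_def)
qed

end

lemma real_distribution_normal_density:
  "0 < \<sigma> \<Longrightarrow> real_distribution (density lborel (normal_density \<mu> \<sigma>))"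
  using prob_space_normal_density by (simp add: real_distribution_def real_distribution_axioms_def)

lemma char_normal_density:
  assumes "0 < \<sigma>"
  shows "char (density lborel (normal_density 0 \<sigma>)) t = exp (- (\<sigma> * t)\<^sup>2 / 2)"
proof -
  interpret std: real_distribution std_normal_distribution
    by (rule real_dist_normal_dist)
  have "distributed std_normal_distribution lborel (\<lambda>x. x) std_normal_density"
    by (auto simp: distributed_def distr_id2 sets_eq_imp_space_eq)
  from std.normal_density_affine[OF this, of \<sigma> 0]
  have "distr std_normal_distribution lborel (\<lambda>x. \<sigma> * x) = density lborel (normal_density 0 \<sigma>)"
    using assms by (simp add: distributed_def)
  then have "char (density lborel (normal_density 0 \<sigma>)) t = char std_normal_distribution (t * \<sigma>)"
    unfolding char_def by (subst (asm) eq_commute) (simp add: integral_distr mult.assoc)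
  also have "\<dots> = exp (- (\<sigma> * t)\<^sup>2 / 2)"
    by (simp add: char_std_normal_distribution mult.commute)
  finally show ?thesis .
qed

theorem theorem4:
  fixes M :: "'s measure" and X :: "nat \<Rightarrow> 's \<Rightarrow> real" and a p \<sigma>2 :: real
  assumes "0 < a" "a < 1" "0 < p" "p < 1"
    and "copula_markov_chain M X (mix_copula a) (bernoulli_cdf p)"
    and "\<sigma>2 = (if p < 1/2 then p * (1 - p) * (1 + a - 2 * p) / (1 - a)
                           else p * (1 - p) * (a + 2 * p - 1) / (1 - a))"
  shows "weak_conv_m
           (\<lambda>n. distr M borel
                  (\<lambda>\<omega>. sqrt (real n + 1) * ((\<Sum>t\<le>n. X t \<omega>) / (real n + 1) - p)))
           (density lborel (normal_density 0 (sqrt \<sigma>2)))"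
proof -
  interpret mix_copula_bernoulli_chain M X a p
    using assms(1-5) by unfold_locales
  have variance: "\<sigma>2 = chain.limit_variance"
    using assms(6) by (simp add: limit_variance_eq)
  then have sd_pos: "0 < sqrt \<sigma>2"
    using chain.limit_variance_pos by simp
  show ?thesis
  proof (rule levy_continuity)
    show "real_distribution (distr M borel (\<lambda>\<omega>. sqrt (real n + 1) * ((\<Sum>t\<le>n. X t \<omega>) / (real n + 1) - p)))"
      for n by (intro real_distribution_distr) measurable
    show "(\<lambda>n. char (distr M borel (\<lambda>\<omega>. sqrt (real n + 1) * ((\<Sum>t\<le>n. X t \<omega>) / (real n + 1) - p))) t)
        \<longlonglongrightarrow> char (density lborel (normal_density 0 (sqrt \<sigma>2))) t" for t
      unfolding char_normalized_sum char_normal_density[OF sd_pos]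
      using chain.centered_char_sum_limit[of t] variance chain.limit_variance_pos
      by (simp add: power_mult_distrib)
  qed (rule real_distribution_normal_density[OF sd_pos])
qed

end
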